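(* Let $A=(a_{ij})_{i,j\in I}$ be a random matrix with nonnegative off-diagonal entries, let $L$ be its (random) Laplacian, define $a_{ii}:=1-\sum_{j\ne i}a_{ij}$, and let $\alpha>0$ be a constant such that almost surely $a_{ii}\ge\alpha$ for all $i\in I$. Suppose $\mathbf{1}^*\mathbb{E}(L)=0$ and that there exists $\beta>0$ with $\mathbb{E}(L^*\mathbf{1}\mathbf{1}^*L)\le\beta\,\mathbb{E}(L+L^* )$. Then $$\mathbb{E}(L^*\mathbf{1}\mathbf{1}^*L)\le\gamma\,\mathbb{E}(L+L^*-L^*L)\quad\text{with }\gamma=\frac{\beta}{\alpha}.$$
   Context: $I$ is a finite set. The Laplacian $L$ of a matrix $A$ with nonnegative off-diagonal entries is defined by $L_{ij}=-A_{ij}$ for $i\ne j$ and $L_{ii}=\sum_{j\ne i}A_{ij}$. $\mathbf{1}$ is the all-ones vector, $M^*$ is the transpose. For square matrices, $A\le B$ means $A-B$ is negative semidefinite. *)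

theory Defs
  imports "HOL-Probability.Probability"
begin

text \<open>Matrices indexed by a finite type 'n (the finite index set I).\<close>

definition laplacian :: "real^'n^'n \<Rightarrow> real^'n^'n" where
  "laplacian A = (\<chi> i j. if i = j then (\<Sum>k\<in>UNIV - {i}. A $ i $ k) else - (A $ i $ j))"

definition ones :: "real^'n" where
  "ones = (\<chi> i. 1)"

definition outer :: "real^'n \<Rightarrow> real^'n \<Rightarrow> real^'n^'n" where
  "outer u v = (\<chi> i j. u $ i * v $ j)"

definition mexp :: "'w measure \<Rightarrow> ('w \<Rightarrow> real^'n^'n) \<Rightarrow> real^'n^'n" where
  "mexp M X = (\<chi> i j. integral\<^sup>L M (\<lambda>w. X w $ i $ j))"

definition mat_le :: "real^'n^'n \<Rightarrow> real^'n^'n \<Rightarrow> bool" where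
  "mat_le A B \<longleftrightarrow> (\<forall>x. x \<bullet> ((A - B) *v x) \<le> 0)"

end

theory Submission
  imports Defs
begin

(* Write L for the Laplacian of a fixed matrix A, B for its off-diagonal part and
   r = L x.  Then r_i = sum_j B_ij (x_i - x_j), and summing by parts gives
     2 x.(L x) = sum_ij B_ij (x_i - x_j)^2 + sum_j (1^T L)_j x_j^2.
   By weighted Cauchy-Schwarz r_i^2 <= (sum_j B_ij) sum_j B_ij (x_i - x_j)^2, and the row sums
   of B are at most 1 - alpha.  Together these give, for every realisation,
     x.(L + L^T - L^T L) x - alpha x.(L + L^T) x >= (1 - alpha) sum_j (1^T L)_j x_j^2.
   The right-hand side is linear in L, so its expectation vanishes because 1^T E(L) = 0.
   Since the entries of L are almost surely bounded, all matrices involved are integrable and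
   expectation commutes with quadratic forms; hence alpha E(L + L^T) <= E(L + L^T - L^T L) in
   the Loewner order.  The theorem follows by chaining this with the hypothesis
   E(L^T 1 1^T L) <= beta E(L + L^T). *)

section \<open>Quadratic forms of a Laplacian\<close>

definition offdiag :: "real^'n^'n \<Rightarrow> 'n \<Rightarrow> 'n \<Rightarrow> real" where
  "offdiag A i j = (if i = j then 0 else A $ i $ j)"

lemma offdiag_row_sum: "(\<Sum>j\<in>UNIV - {i}. A $ i $ j) = (\<Sum>j\<in>UNIV. offdiag A i j)"
  by (simp add: offdiag_def sum.remove[of UNIV i])

lemma laplacian_entry:
  "laplacian A $ i $ j = (if i = j then (\<Sum>k\<in>UNIV. offdiag A i k) else 0) - offdiag A i j"
  by (simp add: laplacian_def offdiag_row_sum offdiag_def)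

lemma laplacian_mult_vec:
  "(laplacian A *v x) $ i = (\<Sum>j\<in>UNIV. offdiag A i j * (x $ i - x $ j))"
proof -
  have "(laplacian A *v x) $ i
      = (\<Sum>j\<in>UNIV. ((if i = j then \<Sum>k\<in>UNIV. offdiag A i k else 0) - offdiag A i j) * x $ j)"
    by (simp add: matrix_vector_mult_def laplacian_entry)
  also have "\<dots> = (\<Sum>k\<in>UNIV. offdiag A i k) * x $ i - (\<Sum>j\<in>UNIV. offdiag A i j * x $ j)"
    by (simp add: left_diff_distrib sum_subtractf if_distrib[of "\<lambda>t. t * _"] cong: if_cong)
  also have "\<dots> = (\<Sum>j\<in>UNIV. offdiag A i j * (x $ i - x $ j))"
    by (simp add: right_diff_distrib sum_subtractf sum_distrib_right)
  finally show ?thesis .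
qed

lemma ones_laplacian:
  "(ones v* laplacian A) $ j = (\<Sum>k\<in>UNIV. offdiag A j k) - (\<Sum>i\<in>UNIV. offdiag A i j)"
  by (simp add: vector_matrix_mult_def ones_def laplacian_entry sum_subtractf)

text \<open>Summation by parts: the symmetric part of the quadratic form is the weighted energy
  of the differences, corrected by the column sums of the Laplacian.\<close>
lemma laplacian_quadratic_form:
  "2 * (x \<bullet> (laplacian A *v x))
     = (\<Sum>i\<in>UNIV. \<Sum>j\<in>UNIV. offdiag A i j * (x $ i - x $ j)^2)
       + (\<Sum>j\<in>UNIV. (ones v* laplacian A) $ j * (x $ j)^2)"
proof -
  let ?B = "offdiag A"
  have pointwise: "2 * (x $ i * (laplacian A *v x) $ i)
      = (\<Sum>j\<in>UNIV. ?B i j * (x $ i - x $ j)^2) + (\<Sum>j\<in>UNIV. ?B i j * (x $ i)^2)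
        - (\<Sum>j\<in>UNIV. ?B i j * (x $ j)^2)" for i
    unfolding laplacian_mult_vec
    by (simp add: sum_distrib_left sum_subtractf[symmetric] sum.distrib[symmetric]
        algebra_simps power2_eq_square)
  have out_degree: "(\<Sum>i\<in>UNIV. \<Sum>j\<in>UNIV. ?B i j * (x $ i)^2)
      = (\<Sum>j\<in>UNIV. (\<Sum>k\<in>UNIV. ?B j k) * (x $ j)^2)"
    by (simp add: sum_distrib_right)
  have in_degree: "(\<Sum>i\<in>UNIV. \<Sum>j\<in>UNIV. ?B i j * (x $ j)^2)
      = (\<Sum>j\<in>UNIV. (\<Sum>i\<in>UNIV. ?B i j) * (x $ j)^2)"
    by (subst sum.swap) (simp add: sum_distrib_right)
  have "2 * (x \<bullet> (laplacian A *v x)) = (\<Sum>i\<in>UNIV. 2 * (x $ i * (laplacian A *v x) $ i))"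
    by (simp add: inner_vec_def sum_distrib_left)
  also have "\<dots> = (\<Sum>i\<in>UNIV. \<Sum>j\<in>UNIV. ?B i j * (x $ i - x $ j)^2)
      + (\<Sum>i\<in>UNIV. \<Sum>j\<in>UNIV. ?B i j * (x $ i)^2) - (\<Sum>i\<in>UNIV. \<Sum>j\<in>UNIV. ?B i j * (x $ j)^2)"
    by (simp add: pointwise sum.distrib sum_subtractf)
  finally show ?thesis
    by (simp add: out_degree in_degree ones_laplacian left_diff_distrib sum_subtractf)
qed

lemma weighted_cauchy_schwarz:
  fixes b d :: "'a \<Rightarrow> real"
  assumes "finite S" and "\<And>j. j \<in> S \<Longrightarrow> 0 \<le> b j"
  shows "(\<Sum>j\<in>S. b j * d j)^2 \<le> (\<Sum>j\<in>S. b j) * (\<Sum>j\<in>S. b j * (d j)^2)"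
proof -
  have "(\<Sum>j\<in>S. sqrt (b j) * (sqrt (b j) * d j))^2
      \<le> (\<Sum>j\<in>S. (sqrt (b j))^2) * (\<Sum>j\<in>S. (sqrt (b j) * d j)^2)"
    by (rule Cauchy_Schwarz_ineq_sum)
  moreover have "sqrt (b j) * (sqrt (b j) * d j) = b j * d j" if "j \<in> S" for j
    using assms(2)[OF that] by (simp add: mult.assoc[symmetric])
  moreover have "(sqrt (b j) * d j)^2 = b j * (d j)^2" if "j \<in> S" for j
    using assms(2)[OF that] by (simp add: power_mult_distrib)
  ultimately show ?thesis
    using assms(2) by (simp cong: sum.cong)
qed

lemma laplacian_mult_vec_square:
  assumes nonneg: "\<forall>i j. i \<noteq> j \<longrightarrow> 0 \<le> A $ i $ j"
    and row: "(\<Sum>j\<in>UNIV - {i}. A $ i $ j) \<le> c"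
  shows "((laplacian A *v x) $ i)^2 \<le> c * (\<Sum>j\<in>UNIV. offdiag A i j * (x $ i - x $ j)^2)"
proof -
  have weights: "0 \<le> offdiag A i j" for j
    using nonneg by (simp add: offdiag_def)
  have "((laplacian A *v x) $ i)^2
      \<le> (\<Sum>j\<in>UNIV. offdiag A i j) * (\<Sum>j\<in>UNIV. offdiag A i j * (x $ i - x $ j)^2)"
    unfolding laplacian_mult_vec by (rule weighted_cauchy_schwarz) (simp_all add: weights)
  also have "\<dots> \<le> c * (\<Sum>j\<in>UNIV. offdiag A i j * (x $ i - x $ j)^2)"
    using row weights by (intro mult_right_mono) (auto simp: offdiag_row_sum intro: sum_nonneg)
  finally show ?thesis .
qed

lemma inner_transpose_mult_vec: "x \<bullet> (transpose (L::real^'n^'n) *v y) = y \<bullet> (L *v x)"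
  by (simp add: dot_lmul_matrix[symmetric] inner_commute)

lemma quadratic_form_gram: "x \<bullet> ((transpose (L::real^'n^'n) ** L) *v x) = (\<Sum>i\<in>UNIV. ((L *v x) $ i)^2)"
  unfolding matrix_vector_mul_assoc[symmetric] inner_transpose_mult_vec
  by (simp add: inner_vec_def power2_eq_square)

lemma laplacian_pointwise_bound:
  fixes A :: "real^'n^'n" and x :: "real^'n"
  assumes nonneg: "\<forall>i j. i \<noteq> j \<longrightarrow> 0 \<le> A $ i $ j"
    and row: "\<forall>i. \<alpha> \<le> 1 - (\<Sum>j\<in>UNIV - {i}. A $ i $ j)"
  shows "(1 - \<alpha>) * (\<Sum>j\<in>UNIV. (ones v* laplacian A) $ j * (x $ j)^2)
    \<le> x \<bullet> ((laplacian A + transpose (laplacian A) - transpose (laplacian A) ** laplacian A) *v x)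
       - \<alpha> * (x \<bullet> ((laplacian A + transpose (laplacian A)) *v x))"
proof -
  define L where "L = laplacian A"
  define Q where "Q i = (\<Sum>j\<in>UNIV. offdiag A i j * (x $ i - x $ j)^2)" for i
  define C where "C = (\<Sum>j\<in>UNIV. (ones v* L) $ j * (x $ j)^2)"
  have energy: "2 * (x \<bullet> (L *v x)) = (\<Sum>i\<in>UNIV. Q i) + C"
    unfolding L_def Q_def C_def by (rule laplacian_quadratic_form)
  have "(\<Sum>i\<in>UNIV. ((L *v x) $ i)^2) \<le> (\<Sum>i\<in>UNIV. (1 - \<alpha>) * Q i)"
    unfolding L_def Q_def
    using nonneg row by (intro sum_mono laplacian_mult_vec_square) (auto simp: algebra_simps)
  then have gram: "(\<Sum>i\<in>UNIV. ((L *v x) $ i)^2) \<le> (1 - \<alpha>) * (\<Sum>i\<in>UNIV. Q i)"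
    by (simp add: sum_distrib_left)
  have "x \<bullet> ((L + transpose L - transpose L ** L) *v x) - \<alpha> * (x \<bullet> ((L + transpose L) *v x))
      = (1 - \<alpha>) * (2 * (x \<bullet> (L *v x))) - (\<Sum>i\<in>UNIV. ((L *v x) $ i)^2)"
    by (simp del: transpose_matrix_vector
        add: matrix_vector_mult_add_rdistrib matrix_vector_mult_diff_rdistrib inner_add_right
          inner_diff_right inner_transpose_mult_vec quadratic_form_gram algebra_simps)
  then show ?thesis
    using gram unfolding energy L_def[symmetric] C_def[symmetric] by (simp add: algebra_simps)
qed

section \<open>Bounded random matrices and their expectations\<close>

text \<open>A random matrix with measurable entries that are almost surely bounded by \<open>K\<close>; such
  matrices are entrywise integrable on a probability space, and the class is closed under the
  matrix operations occurring in the theorem.\<close>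
definition bounded_random_matrix :: "'w measure \<Rightarrow> ('w \<Rightarrow> real^'n^'n) \<Rightarrow> real \<Rightarrow> bool" where
  "bounded_random_matrix M X K \<longleftrightarrow>
     (\<forall>i j. (\<lambda>w. X w $ i $ j) \<in> borel_measurable M) \<and> (AE w in M. \<forall>i j. \<bar>X w $ i $ j\<bar> \<le> K)"

lemma bounded_random_matrix_AE_bound:
  "bounded_random_matrix M X K \<Longrightarrow> AE w in M. \<forall>i j. \<bar>X w $ i $ j\<bar> \<le> K"
  unfolding bounded_random_matrix_def by auto

lemma bounded_random_matrix_add:
  assumes X: "bounded_random_matrix M X K1" and Y: "bounded_random_matrix M Y K2"
  shows "bounded_random_matrix M (\<lambda>w. X w + Y w) (K1 + K2)"
proof -
  have "AE w in M. \<forall>i j. \<bar>(X w + Y w) $ i $ j\<bar> \<le> K1 + K2"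
    using bounded_random_matrix_AE_bound[OF X] bounded_random_matrix_AE_bound[OF Y]
    by eventually_elim (auto intro!: order_trans[OF abs_triangle_ineq] add_mono)
  with X Y show ?thesis
    unfolding bounded_random_matrix_def by (auto intro!: borel_measurable_add)
qed

lemma bounded_random_matrix_diff:
  assumes X: "bounded_random_matrix M X K1" and Y: "bounded_random_matrix M Y K2"
  shows "bounded_random_matrix M (\<lambda>w. X w - Y w) (K1 + K2)"
proof -
  have "AE w in M. \<forall>i j. \<bar>(X w - Y w) $ i $ j\<bar> \<le> K1 + K2"
    using bounded_random_matrix_AE_bound[OF X] bounded_random_matrix_AE_bound[OF Y]
    by eventually_elim (auto intro!: order_trans[OF abs_triangle_ineq4] add_mono)
  with X Y show ?thesis
    unfolding bounded_random_matrix_def by (auto intro!: borel_measurable_diff)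
qed

lemma bounded_random_matrix_transpose:
  "bounded_random_matrix M X K \<Longrightarrow> bounded_random_matrix M (\<lambda>w. transpose (X w)) K"
  unfolding bounded_random_matrix_def by (auto simp: transpose_def)

lemma bounded_random_matrix_mult:
  fixes X Y :: "'w \<Rightarrow> real^'n^'n"
  assumes X: "bounded_random_matrix M X K1" and Y: "bounded_random_matrix M Y K2"
  shows "bounded_random_matrix M (\<lambda>w. X w ** Y w) (of_nat CARD('n) * (K1 * K2))"
proof -
  have entry_bound: "\<bar>(X w ** Y w) $ i $ j\<bar> \<le> of_nat CARD('n) * (K1 * K2)"
    if bX: "\<forall>i j. \<bar>X w $ i $ j\<bar> \<le> K1" and bY: "\<forall>i j. \<bar>Y w $ i $ j\<bar> \<le> K2" for w i j
  proof -
    have "\<bar>(X w ** Y w) $ i $ j\<bar> \<le> (\<Sum>k\<in>UNIV. \<bar>X w $ i $ k\<bar> * \<bar>Y w $ k $ j\<bar>)"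
      unfolding matrix_matrix_mult_def by (simp add: abs_mult[symmetric] sum_abs)
    also have "\<dots> \<le> (\<Sum>k\<in>(UNIV::'n set). K1 * K2)"
      using bX bY by (intro sum_mono mult_mono) (auto intro: order_trans[OF abs_ge_zero])
    finally show ?thesis by simp
  qed
  have "AE w in M. \<forall>i j. \<bar>(X w ** Y w) $ i $ j\<bar> \<le> of_nat CARD('n) * (K1 * K2)"
    using bounded_random_matrix_AE_bound[OF X] bounded_random_matrix_AE_bound[OF Y]
    by eventually_elim (use entry_bound in blast)
  moreover have "(\<lambda>w. (X w ** Y w) $ i $ j) \<in> borel_measurable M" for i j
    using X Y unfolding bounded_random_matrix_def matrix_matrix_mult_def
    by (auto intro!: borel_measurable_sum borel_measurable_times)
  ultimately show ?thesis
    unfolding bounded_random_matrix_def by auto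
qed

lemma bounded_random_matrix_integrable:
  assumes "prob_space M" and X: "bounded_random_matrix M X K"
  shows "integrable M (\<lambda>w. X w $ i $ j)"
proof -
  interpret prob_space M by fact
  have "AE w in M. norm (X w $ i $ j) \<le> K"
    using bounded_random_matrix_AE_bound[OF X] by eventually_elim auto
  with X show ?thesis
    unfolding bounded_random_matrix_def by (auto intro!: integrable_const_bound[where B = K])
qed

lemma bounded_random_matrix_laplacian:
  fixes A :: "'w \<Rightarrow> real^'n^'n"
  assumes meas: "\<forall>i j. (\<lambda>w. A w $ i $ j) \<in> borel_measurable M"
    and nonneg: "\<forall>w\<in>space M. \<forall>i j. i \<noteq> j \<longrightarrow> A w $ i $ j \<ge> 0"
    and row: "AE w in M. \<forall>i. 1 - (\<Sum>j\<in>UNIV - {i}. A w $ i $ j) \<ge> \<alpha>"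
  shows "bounded_random_matrix M (\<lambda>w. laplacian (A w)) (1 - \<alpha>)"
proof -
  have entry_bound: "\<bar>laplacian (A w) $ i $ j\<bar> \<le> 1 - \<alpha>"
    if w: "w \<in> space M" and row_w: "\<forall>i. 1 - (\<Sum>j\<in>UNIV - {i}. A w $ i $ j) \<ge> \<alpha>" for w i j
  proof -
    have weights: "0 \<le> offdiag (A w) i k" for k
      using nonneg w by (simp add: offdiag_def)
    have upper: "(\<Sum>k\<in>UNIV. offdiag (A w) i k) \<le> 1 - \<alpha>"
      using row_w[rule_format, of i] by (simp add: offdiag_row_sum)
    have "offdiag (A w) i j \<le> (\<Sum>k\<in>UNIV. offdiag (A w) i k)"
      using weights by (intro member_le_sum) auto
    then show ?thesis
      using weights[of j] upper sum_nonneg[of UNIV "offdiag (A w) i", OF weights]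
      by (auto simp: laplacian_entry offdiag_def split: if_splits)
  qed
  have "AE w in M. \<forall>i j. \<bar>laplacian (A w) $ i $ j\<bar> \<le> 1 - \<alpha>"
    using row AE_space by eventually_elim (use entry_bound in blast)
  moreover have "(\<lambda>w. laplacian (A w) $ i $ j) \<in> borel_measurable M" for i j
    using meas by (cases "i = j") (auto simp: laplacian_def intro!: borel_measurable_sum)
  ultimately show ?thesis
    unfolding bounded_random_matrix_def by auto
qed

lemma quadratic_form_mexp:
  assumes "\<forall>i j. integrable M (\<lambda>w. X w $ i $ j)"
  shows "integrable M (\<lambda>w. x \<bullet> (X w *v x))"
    and "x \<bullet> (mexp M X *v x) = (\<integral>w. x \<bullet> (X w *v x) \<partial>M)"
  using assms by (simp_all add: inner_vec_def matrix_vector_mult_def mexp_def sum_distrib_left)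

lemma integral_column_sum_form:
  assumes int: "\<forall>i j. integrable M (\<lambda>w. X w $ i $ j)" and zero: "ones v* mexp M X = 0"
  shows "integrable M (\<lambda>w. \<Sum>j\<in>UNIV. (ones v* X w) $ j * c j)"
    and "(\<integral>w. (\<Sum>j\<in>UNIV. (ones v* X w) $ j * c j) \<partial>M) = 0"
proof -
  have column: "integrable M (\<lambda>w. (ones v* X w) $ j)"
      "(\<integral>w. (ones v* X w) $ j \<partial>M) = (ones v* mexp M X) $ j" for j
    using int by (simp_all add: vector_matrix_mult_def ones_def mexp_def)
  show "integrable M (\<lambda>w. \<Sum>j\<in>UNIV. (ones v* X w) $ j * c j)"
    using column by simp
  show "(\<integral>w. (\<Sum>j\<in>UNIV. (ones v* X w) $ j * c j) \<partial>M) = 0"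
    using column zero by simp
qed

lemma mat_le_iff: "mat_le P Q \<longleftrightarrow> (\<forall>x. x \<bullet> (P *v x) \<le> x \<bullet> (Q *v x))"
  by (simp add: mat_le_def matrix_vector_mult_diff_rdistrib inner_diff_right)

lemma expected_laplacian_bound:
  fixes M :: "'w measure" and A :: "'w \<Rightarrow> real^'n^'n"
  assumes P: "prob_space M"
    and meas: "\<forall>i j. (\<lambda>w. A w $ i $ j) \<in> borel_measurable M"
    and nonneg: "\<forall>w\<in>space M. \<forall>i j. i \<noteq> j \<longrightarrow> A w $ i $ j \<ge> 0"
    and row: "AE w in M. \<forall>i. 1 - (\<Sum>j\<in>UNIV - {i}. A w $ i $ j) \<ge> \<alpha>"
    and balanced: "ones v* mexp M (\<lambda>w. laplacian (A w)) = 0"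
  shows "mat_le (\<alpha> *\<^sub>R mexp M (\<lambda>w. laplacian (A w) + transpose (laplacian (A w))))
                (mexp M (\<lambda>w. laplacian (A w) + transpose (laplacian (A w))
                             - transpose (laplacian (A w)) ** laplacian (A w)))"
  unfolding mat_le_iff
proof
  fix x :: "real^'n"
  define L where "L = (\<lambda>w. laplacian (A w))"
  define S where "S = (\<lambda>w. L w + transpose (L w))"
  define T where "T = (\<lambda>w. L w + transpose (L w) - transpose (L w) ** L w)"
  have bL: "bounded_random_matrix M L (1 - \<alpha>)"
    unfolding L_def using meas nonneg row by (rule bounded_random_matrix_laplacian)
  have bLt: "bounded_random_matrix M (\<lambda>w. transpose (L w)) (1 - \<alpha>)"
    using bL by (rule bounded_random_matrix_transpose)
  have iL: "\<forall>i j. integrable M (\<lambda>w. L w $ i $ j)"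
    using bounded_random_matrix_integrable[OF P bL] by blast
  have iS: "\<forall>i j. integrable M (\<lambda>w. S w $ i $ j)"
    using bounded_random_matrix_integrable[OF P bounded_random_matrix_add[OF bL bLt]]
    unfolding S_def by blast
  have iT: "\<forall>i j. integrable M (\<lambda>w. T w $ i $ j)"
    using bounded_random_matrix_integrable[OF P bounded_random_matrix_diff
        [OF bounded_random_matrix_add[OF bL bLt] bounded_random_matrix_mult[OF bLt bL]]]
    unfolding T_def by blast
  define g where "g w = (\<Sum>j\<in>UNIV. (ones v* L w) $ j * ((1 - \<alpha>) * (x $ j)^2))" for w
  have ig: "integrable M g" and Eg: "(\<integral>w. g w \<partial>M) = 0"
    unfolding g_def using integral_column_sum_form[OF iL] balanced by (simp_all add: L_def)
  have realisation_bound: "AE w in M. g w \<le> x \<bullet> (T w *v x) - \<alpha> * (x \<bullet> (S w *v x))"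
    using row AE_space
  proof eventually_elim
    case (elim w)
    then show ?case
      using laplacian_pointwise_bound[of "A w" \<alpha> x] nonneg
      by (simp add: g_def T_def S_def L_def sum_distrib_left algebra_simps)
  qed
  have "0 = (\<integral>w. g w \<partial>M)"
    using Eg by simp
  also have "\<dots> \<le> (\<integral>w. x \<bullet> (T w *v x) - \<alpha> * (x \<bullet> (S w *v x)) \<partial>M)"
    using quadratic_form_mexp(1)[OF iT] quadratic_form_mexp(1)[OF iS]
    by (intro integral_mono_AE[OF ig _ realisation_bound]) simp
  also have "\<dots> = x \<bullet> (mexp M T *v x) - \<alpha> * (x \<bullet> (mexp M S *v x))"
    using quadratic_form_mexp[OF iT] quadratic_form_mexp[OF iS] by simp
  finally show "x \<bullet> ((\<alpha> *\<^sub>R mexp M (\<lambda>w. laplacian (A w) + transpose (laplacian (A w)))) *v x)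
      \<le> x \<bullet> (mexp M (\<lambda>w. laplacian (A w) + transpose (laplacian (A w))
                          - transpose (laplacian (A w)) ** laplacian (A w)) *v x)"
    by (simp add: S_def T_def L_def scaleR_matrix_vector_assoc[symmetric])
qed

lemma mat_le_scaled_trans:
  fixes P Q R :: "real^'n^'n"
  assumes PQ: "mat_le P (\<beta> *\<^sub>R Q)" and QR: "mat_le (\<alpha> *\<^sub>R Q) R"
    and "\<alpha> > 0" and "\<beta> \<ge> 0"
  shows "mat_le P ((\<beta> / \<alpha>) *\<^sub>R R)"
  unfolding mat_le_iff
proof
  fix x :: "real^'n"
  have "x \<bullet> (P *v x) \<le> \<beta> * (x \<bullet> (Q *v x))"
    using PQ by (simp add: mat_le_iff scaleR_matrix_vector_assoc[symmetric])
  also have "\<dots> = (\<beta> / \<alpha>) * (\<alpha> * (x \<bullet> (Q *v x)))"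
    using \<open>\<alpha> > 0\<close> by simp
  also have "\<dots> \<le> (\<beta> / \<alpha>) * (x \<bullet> (R *v x))"
    using QR \<open>\<alpha> > 0\<close> \<open>\<beta> \<ge> 0\<close>
    by (intro mult_left_mono) (simp_all add: mat_le_iff scaleR_matrix_vector_assoc[symmetric])
  finally show "x \<bullet> (P *v x) \<le> x \<bullet> (((\<beta> / \<alpha>) *\<^sub>R R) *v x)"
    by (simp add: scaleR_matrix_vector_assoc[symmetric])
qed

theorem lemma2:
  fixes M :: "'w measure" and A :: "'w \<Rightarrow> real^'n^'n" and \<alpha> \<beta> :: real
  assumes "prob_space M"
    and "\<forall>i j. (\<lambda>w. A w $ i $ j) \<in> borel_measurable M"
    and "\<forall>w\<in>space M. \<forall>i j. i \<noteq> j \<longrightarrow> A w $ i $ j \<ge> 0"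
    and "\<alpha> > 0"
    and "AE w in M. \<forall>i. 1 - (\<Sum>j\<in>UNIV - {i}. A w $ i $ j) \<ge> \<alpha>"
    and "ones v* mexp M (\<lambda>w. laplacian (A w)) = 0"
    and "\<beta> > 0"
    and "mat_le (mexp M (\<lambda>w. transpose (laplacian (A w)) ** outer ones ones ** laplacian (A w)))
                (\<beta> *\<^sub>R mexp M (\<lambda>w. laplacian (A w) + transpose (laplacian (A w))))"
  shows "mat_le (mexp M (\<lambda>w. transpose (laplacian (A w)) ** outer ones ones ** laplacian (A w)))
                ((\<beta> / \<alpha>) *\<^sub>R mexp M (\<lambda>w. laplacian (A w) + transpose (laplacian (A w))
                                        - transpose (laplacian (A w)) ** laplacian (A w)))"
proof (rule mat_le_scaled_trans)
  show "mat_le (\<alpha> *\<^sub>R mexp M (\<lambda>w. laplacian (A w) + transpose (laplacian (A w))))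
          (mexp M (\<lambda>w. laplacian (A w) + transpose (laplacian (A w))
                       - transpose (laplacian (A w)) ** laplacian (A w)))"
    using assms(1,2,3,5,6) by (rule expected_laplacian_bound)
qed (use assms(4,7,8) in auto)

end
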